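(* Let $B$ be a finite set of closed, bounded line segments in $\mathbb{R}^2$ and let $R(B)=\{p\in\mathbb{R}^2: \text{every line through } p \text{ intersects } B\}$. If a maximal region of $R(B)$ is a line segment, then that line segment is contained in $B$ (i.e., in the union of the segments of $B$).
   Context: A region is a bounded, closed, connected subset of $\mathbb{R}^2$. For a set $P\subseteq\mathbb{R}^2$, a maximal region of $P$ is a region $R$ such that for every point $p\in R$ there is an open ball $A$ centered at $p$ with $A\cap R = A\cap P$. A line intersects $B$ if it meets at least one segment of $B$. *)

theory Defs
  imports "HOL-Analysis.Analysis"
begin

definition line_dir :: "real^2 \<Rightarrow> real^2 \<Rightarrow> (real^2) set" where
  "line_dir p d = {p + t *\<^sub>R d | t. True}"

definition is_segment :: "(real^2) set \<Rightarrow> bool" where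
  "is_segment S \<longleftrightarrow> (\<exists>a b. S = closed_segment a b)"

definition line_meets :: "(real^2) set \<Rightarrow> (real^2) set set \<Rightarrow> bool" where
  "line_meets L B \<longleftrightarrow> (\<exists>S\<in>B. L \<inter> S \<noteq> {})"

definition RB :: "(real^2) set set \<Rightarrow> (real^2) set" where
  "RB B = {p. \<forall>d. d \<noteq> 0 \<longrightarrow> line_meets (line_dir p d) B}"

definition region :: "(real^2) set \<Rightarrow> bool" where
  "region R \<longleftrightarrow> bounded R \<and> closed R \<and> connected R"

definition maximal_region :: "(real^2) set \<Rightarrow> (real^2) set \<Rightarrow> bool" where
  "maximal_region P R \<longleftrightarrow> region R \<and>
     (\<forall>p\<in>R. \<exists>e>0. ball p e \<inter> R = ball p e \<inter> P)"

end

theory Submission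
  imports Defs
begin

text \<open>
  Suppose a point of the maximal region R = [a,b] lies off the union of B. Since this union is
  closed, there is such a point p in the open segment, and near p the set R(B) is exactly the
  line \<ell> through a and b. Take coordinates with origin p and \<ell> as horizontal axis. The points
  at height h and -h above p lie outside R(B), so some lines through them miss B; they are not
  vertical (the vertical line through p meets B), and since they cannot cross \<ell> near p their
  slopes are O(h). On the other hand the line through p whose slope is the average of the two
  meets some segment S of B. An affine function that has a constant sign on both endpoints for
  each of the two missing lines but changes sign for their average must take opposite signs,
  so every endpoint of S lies between the two missing lines, i.e. within O(h) of \<ell>. For h small
  compared with the finitely many endpoints off \<ell> this forces S \<subseteq> \<ell>, and then the
  averaged line, whose slope can be made nonzero, meets S only at p: a contradiction.
\<close>

definition perp :: "real^2 \<Rightarrow> real^2" where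
  "perp u = vector [- (u$2), u$1]"

lemma inner_perp [simp]: "u \<bullet> perp u = 0" "perp u \<bullet> u = 0" "perp u \<bullet> perp u = u \<bullet> u"
  by (simp_all add: perp_def inner_vec_def sum_2 vector_2 algebra_simps)

lemma perp_decomposition: "(u \<bullet> u) *\<^sub>R v = (v \<bullet> u) *\<^sub>R u + (v \<bullet> perp u) *\<^sub>R perp u"
  by (simp add: perp_def vec_eq_iff forall_2 inner_vec_def sum_2 vector_2 algebra_simps)

lemma affine_zero_on_segment_iff:
  fixes f :: "'a::real_vector \<Rightarrow> real"
  assumes affine: "\<And>t. f ((1 - t) *\<^sub>R x + t *\<^sub>R y) = (1 - t) * f x + t * f y"
  shows "(\<exists>w\<in>closed_segment x y. f w = 0) \<longleftrightarrow> f x * f y \<le> 0"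
proof
  assume "\<exists>w\<in>closed_segment x y. f w = 0"
  then obtain t where "0 \<le> t" "t \<le> 1" "(1 - t) * f x + t * f y = 0"
    using affine by (auto simp: in_segment)
  then show "f x * f y \<le> 0"
    by (smt (verit, best) mult_eq_0_iff zero_le_mult_iff)
next
  assume sign: "f x * f y \<le> 0"
  show "\<exists>w\<in>closed_segment x y. f w = 0"
  proof (cases "f x = f y")
    case True
    then show ?thesis using sign by (intro bexI[of _ x]) (auto simp: mult_le_0_iff)
  next
    case False
    define t where "t = f x / (f x - f y)"
    have d: "f x - f y \<noteq> 0" using False by simp
    have "0 \<le> t \<and> t \<le> 1"
      using sign d unfolding t_def
      by (auto simp: mult_le_0_iff divide_simps split: if_splits)
    moreover have "(1 - t) * f x + t * f y = 0"
      using d unfolding t_def by (simp add: field_simps)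
    ultimately show ?thesis using affine
      by (intro bexI[of _ "(1 - t) *\<^sub>R x + t *\<^sub>R y"]) (auto simp: in_segment)
  qed
qed

lemma sign_change_of_sum:
  fixes a1 a2 b1 b2 :: real
  assumes "a1 * a2 > 0" "b1 * b2 > 0" "(a1 + b1) * (a2 + b2) \<le> 0"
  shows "a1 * b1 < 0"
  using assms by (auto simp: zero_less_mult_iff mult_le_0_iff mult_less_0_iff)

lemma between_lines_bound:
  fixes x y h b1 b2 \<tau> :: real
  assumes between: "(y - (h + b1 * x)) * (y - (- h + b2 * x)) < 0"
    and "\<tau> * \<bar>b1\<bar> \<le> h" "\<tau> * \<bar>b2\<bar> \<le> h" "\<tau> > 0"
  shows "\<tau> * \<bar>y\<bar> < h * (\<tau> + \<bar>x\<bar>)"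
proof -
  have line_bound: "\<tau> * \<bar>s + b * x\<bar> \<le> h * (\<tau> + \<bar>x\<bar>)" if "\<tau> * \<bar>b\<bar> \<le> h" "\<bar>s\<bar> = h" for s b
  proof -
    have "\<tau> * \<bar>s + b * x\<bar> \<le> \<tau> * \<bar>s\<bar> + (\<tau> * \<bar>b\<bar>) * \<bar>x\<bar>"
      using mult_left_mono[OF abs_triangle_ineq[of s "b * x"], of \<tau>] \<open>\<tau> > 0\<close>
      by (simp add: abs_mult algebra_simps)
    also have "\<dots> \<le> h * (\<tau> + \<bar>x\<bar>)"
      using that mult_right_mono[OF that(1) abs_ge_zero[of x]] by (simp add: algebra_simps)
    finally show ?thesis .
  qed
  have "h \<ge> 0"
    using assms(2,4) by (smt (verit) abs_ge_zero mult_nonneg_nonneg)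
  have "\<bar>y\<bar> < \<bar>h + b1 * x\<bar> \<or> \<bar>y\<bar> < \<bar>- h + b2 * x\<bar>"
    using between by (auto simp: mult_less_0_iff)
  then show ?thesis
    using line_bound[OF assms(2), of h] line_bound[OF assms(3), of "- h"] \<open>h \<ge> 0\<close> \<open>\<tau> > 0\<close>
    by (smt (verit) mult_strict_left_mono)
qed

lemma exists_other_point_of_open:
  fixes A :: "real set"
  assumes "open A" "x \<in> A"
  shows "\<exists>y\<in>A. y \<noteq> c"
proof (rule ccontr)
  assume "\<not> ?thesis"
  then have "A = {c}" using assms(2) by fastforce
  then show False using assms(1) not_open_singleton by metis
qed

lemma finite_segment_endpoints:
  assumes "finite B" "\<forall>S\<in>B. is_segment S"
  shows "\<exists>E. finite E \<and> (\<forall>S\<in>B. \<exists>x\<in>E. \<exists>y\<in>E. S = closed_segment x y)"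
  using assms
proof (induction B rule: finite_induct)
  case (insert S B)
  then obtain E x y where "finite E" "\<forall>S\<in>B. \<exists>x\<in>E. \<exists>y\<in>E. S = closed_segment x y"
    and "S = closed_segment x y"
    by (auto simp: is_segment_def)
  have "\<forall>S'\<in>insert S B. \<exists>x'\<in>insert x (insert y E). \<exists>y'\<in>insert x (insert y E).
      S' = closed_segment x' y'"
  proof
    fix S' assume "S' \<in> insert S B"
    then consider "S' = S" | "S' \<in> B" by blast
    then show "\<exists>x'\<in>insert x (insert y E). \<exists>y'\<in>insert x (insert y E). S' = closed_segment x' y'"
    proof cases
      case 1
      then show ?thesis
        using \<open>S = closed_segment x y\<close> by (intro bexI[of _ x] bexI[of _ y]) simp_all
    next
      case 2
      then obtain x' y' where "x' \<in> E" "y' \<in> E" "S' = closed_segment x' y'"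
        using \<open>\<forall>S\<in>B. \<exists>x\<in>E. \<exists>y\<in>E. S = closed_segment x y\<close> by blast
      then show ?thesis
        by (intro bexI[of _ x'] bexI[of _ y']) simp_all
    qed
  qed
  then show ?case
    using \<open>finite E\<close> by (intro exI[of _ "insert x (insert y E)"]) simp
qed auto

locale plane_frame =
  fixes p u :: "real^2"
  assumes u_nonzero: "u \<noteq> 0"
begin

text \<open>Coordinates with origin p along u and perp u, scaled by u \<bullet> u so that no division
  occurs.\<close>

definition X :: "real^2 \<Rightarrow> real" where
  "X v = (v - p) \<bullet> u"

definition Y :: "real^2 \<Rightarrow> real" where
  "Y v = (v - p) \<bullet> perp u"

lemma inner_self_u_pos: "u \<bullet> u > 0"
  using u_nonzero by simp

lemma X_add [simp]: "X (v + w) = X v + w \<bullet> u"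
  and Y_add [simp]: "Y (v + w) = Y v + w \<bullet> perp u"
  and X_diff [simp]: "X (v - w) = X v - w \<bullet> u"
  and Y_diff [simp]: "Y (v - w) = Y v - w \<bullet> perp u"
  by (simp_all add: X_def Y_def inner_simps)

lemma X_origin [simp]: "X p = 0" and Y_origin [simp]: "Y p = 0"
  by (simp_all add: X_def Y_def)

lemma X_affine: "X ((1 - t) *\<^sub>R x + t *\<^sub>R y) = (1 - t) * X x + t * X y"
  and Y_affine: "Y ((1 - t) *\<^sub>R x + t *\<^sub>R y) = (1 - t) * Y x + t * Y y"
proof -
  have "(1 - t) *\<^sub>R x + t *\<^sub>R y - p = (1 - t) *\<^sub>R (x - p) + t *\<^sub>R (y - p)"
    by (simp add: algebra_simps)
  then show "X ((1 - t) *\<^sub>R x + t *\<^sub>R y) = (1 - t) * X x + t * X y"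
    and "Y ((1 - t) *\<^sub>R x + t *\<^sub>R y) = (1 - t) * Y x + t * Y y"
    by (simp_all only: X_def Y_def inner_add_left inner_scaleR_left)
qed

lemma frame_eq_iff: "v = w \<longleftrightarrow> X v = X w \<and> Y v = Y w"
proof
  assume "X v = X w \<and> Y v = Y w"
  then have "(u \<bullet> u) *\<^sub>R (v - p) = (u \<bullet> u) *\<^sub>R (w - p)"
    using perp_decomposition[of u "v - p"] perp_decomposition[of u "w - p"]
    by (simp add: X_def Y_def)
  then show "v = w"
    using inner_self_u_pos by simp
qed simp

text \<open>The non-vertical lines are the zero sets of offset \<alpha> \<beta>, i.e. the graphs Y = \<alpha> + \<beta> X.\<close>

definition offset :: "real \<Rightarrow> real \<Rightarrow> real^2 \<Rightarrow> real" where
  "offset \<alpha> \<beta> v = Y v - \<alpha> - \<beta> * X v"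

definition misses :: "(real^2) set set \<Rightarrow> real \<Rightarrow> real \<Rightarrow> bool" where
  "misses B \<alpha> \<beta> \<longleftrightarrow> (\<forall>w\<in>\<Union>B. offset \<alpha> \<beta> w \<noteq> 0)"

lemma offset_zero_on_segment_iff:
  "(\<exists>w\<in>closed_segment x y. offset \<alpha> \<beta> w = 0) \<longleftrightarrow> offset \<alpha> \<beta> x * offset \<alpha> \<beta> y \<le> 0"
  by (rule affine_zero_on_segment_iff) (simp only: offset_def X_affine Y_affine, simp add: algebra_simps)

lemma offset_nonzero_on_segment_iff:
  "(\<forall>w\<in>closed_segment x y. offset \<alpha> \<beta> w \<noteq> 0) \<longleftrightarrow> offset \<alpha> \<beta> x * offset \<alpha> \<beta> y > 0"
proof -
  have "(\<forall>w\<in>closed_segment x y. offset \<alpha> \<beta> w \<noteq> 0) \<longleftrightarrow> \<not> (\<exists>w\<in>closed_segment x y. offset \<alpha> \<beta> w = 0)"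
    by blast
  also have "\<dots> \<longleftrightarrow> offset \<alpha> \<beta> x * offset \<alpha> \<beta> y > 0"
    by (simp add: offset_zero_on_segment_iff not_le)
  finally show ?thesis .
qed

lemma line_dir_eq_offset_zero:
  assumes "d \<bullet> u \<noteq> 0"
  defines \<beta>_def: "\<beta> \<equiv> (d \<bullet> perp u) / (d \<bullet> u)"
  shows "line_dir z d = {v. offset (Y z - \<beta> * X z) \<beta> v = 0}"
proof (intro set_eqI iffI)
  have slope: "\<beta> * (d \<bullet> u) = d \<bullet> perp u"
    using assms(1) by (simp add: \<beta>_def)
  fix v assume "v \<in> line_dir z d"
  then obtain t where "v = z + t *\<^sub>R d" by (auto simp: line_dir_def)
  then show "v \<in> {v. offset (Y z - \<beta> * X z) \<beta> v = 0}"
    using slope by (simp add: offset_def algebra_simps)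
next
  fix v assume "v \<in> {v. offset (Y z - \<beta> * X z) \<beta> v = 0}"
  then have on_line: "Y v = Y z + \<beta> * (X v - X z)" by (simp add: offset_def algebra_simps)
  define t where "t = (X v - X z) / (d \<bullet> u)"
  have "X (z + t *\<^sub>R d) = X v"
    using assms(1) by (simp add: t_def)
  moreover have "Y (z + t *\<^sub>R d) = Y v"
    using on_line by (simp add: t_def \<beta>_def)
  ultimately have "v = z + t *\<^sub>R d"
    by (simp add: frame_eq_iff)
  then show "v \<in> line_dir z d" by (auto simp: line_dir_def)
qed

lemma line_dir_vertical:
  assumes "d \<noteq> 0" "d \<bullet> u = 0"
  shows "line_dir z d = {v. X v = X z}"
proof (intro set_eqI iffI)
  fix v assume "v \<in> line_dir z d"
  then show "v \<in> {v. X v = X z}" using assms(2) by (auto simp: line_dir_def)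
next
  fix v assume "v \<in> {v. X v = X z}"
  have "(u \<bullet> u) *\<^sub>R d = (d \<bullet> perp u) *\<^sub>R perp u"
    using perp_decomposition[of u d] assms(2) by simp
  then have dn: "d \<bullet> perp u \<noteq> 0"
    using assms(1) inner_self_u_pos by (metis less_irrefl scaleR_eq_0_iff)
  define t where "t = (Y v - Y z) / (d \<bullet> perp u)"
  have "X (z + t *\<^sub>R d) = X v"
    using \<open>v \<in> {v. X v = X z}\<close> assms(2) by simp
  moreover have "Y (z + t *\<^sub>R d) = Y v"
    using dn by (simp add: t_def)
  ultimately have "v = z + t *\<^sub>R d"
    by (simp add: frame_eq_iff)
  then show "v \<in> line_dir z d" by (auto simp: line_dir_def)
qed

lemma not_misses_if_RB:
  assumes "z \<in> RB B" "offset \<alpha> \<beta> z = 0"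
  shows "\<not> misses B \<alpha> \<beta>"
proof -
  define d where "d = u + \<beta> *\<^sub>R perp u"
  have du: "d \<bullet> u = u \<bullet> u" and dn: "d \<bullet> perp u = \<beta> * (u \<bullet> u)"
    by (simp_all add: d_def inner_simps)
  then have "d \<noteq> 0" using inner_self_u_pos by auto
  then have "line_meets (line_dir z d) B"
    using assms(1) by (simp add: RB_def)
  then obtain S where "S \<in> B" "line_dir z d \<inter> S \<noteq> {}"
    by (auto simp: line_meets_def)
  moreover have "\<alpha> = Y z - \<beta> * X z"
    using assms(2) by (simp add: offset_def)
  then have "line_dir z d = {v. offset \<alpha> \<beta> v = 0}"
    using line_dir_eq_offset_zero[of d z] du dn inner_self_u_pos by simp
  ultimately show ?thesis by (auto simp: misses_def)
qed

lemma misses_if_not_RB: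
  assumes "p \<in> RB B" "q \<notin> RB B" "X q = 0"
  shows "\<exists>\<beta>. misses B (Y q) \<beta>"
proof -
  obtain d where d: "d \<noteq> 0" "\<not> line_meets (line_dir q d) B"
    using assms(2) by (auto simp: RB_def)
  have "line_meets (line_dir p d) B"
    using assms(1) d(1) by (simp add: RB_def)
  have "d \<bullet> u \<noteq> 0"
  proof
    assume "d \<bullet> u = 0"
    then have "line_dir q d = line_dir p d"
      using line_dir_vertical[OF d(1)] assms(3) by simp
    then show False
      using d(2) \<open>line_meets (line_dir p d) B\<close> by simp
  qed
  then have "line_dir q d = {v. offset (Y q) ((d \<bullet> perp u) / (d \<bullet> u)) v = 0}"
    using line_dir_eq_offset_zero[of d q] assms(3) by simp
  then have "misses B (Y q) ((d \<bullet> perp u) / (d \<bullet> u))"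
    using d(2) by (auto simp: misses_def line_meets_def)
  then show ?thesis ..
qed

lemma open_misses:
  assumes "finite B" "\<forall>S\<in>B. is_segment S"
  shows "open {\<beta>. misses B \<alpha> \<beta>}"
proof -
  have "open {\<beta>. \<forall>w\<in>S. offset \<alpha> \<beta> w \<noteq> 0}" if "S \<in> B" for S
  proof -
    have "\<exists>x y. S = closed_segment x y"
      using assms(2) that by (simp add: is_segment_def)
    then obtain x y where S: "S = closed_segment x y"
      by blast
    have "{\<beta>. \<forall>w\<in>S. offset \<alpha> \<beta> w \<noteq> 0} = {\<beta>. 0 < offset \<alpha> \<beta> x * offset \<alpha> \<beta> y}"
      using offset_nonzero_on_segment_iff[of x y \<alpha>] unfolding S by simp
    moreover have "open {\<beta>. 0 < offset \<alpha> \<beta> x * offset \<alpha> \<beta> y}"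
      unfolding offset_def by (rule open_Collect_less) (intro continuous_intros)+
    ultimately show ?thesis
      by simp
  qed
  moreover have "{\<beta>. misses B \<alpha> \<beta>} = (\<Inter>S\<in>B. {\<beta>. \<forall>w\<in>S. offset \<alpha> \<beta> w \<noteq> 0})"
    unfolding misses_def by blast
  ultimately show ?thesis
    using assms(1) by (auto intro!: open_INT)
qed

lemma norm_mult_dist_le: "norm u * dist p v \<le> \<bar>X v\<bar> + \<bar>Y v\<bar>"
proof -
  have decomposition: "(u \<bullet> u) *\<^sub>R (v - p) = X v *\<^sub>R u + Y v *\<^sub>R perp u"
    using perp_decomposition[of u "v - p"] by (simp add: X_def Y_def)
  have "norm u * (norm u * dist p v) = norm ((u \<bullet> u) *\<^sub>R (v - p))"
    by (simp add: dot_square_norm power2_eq_square dist_norm norm_minus_commute)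
  also have "\<dots> \<le> norm u * (\<bar>X v\<bar> + \<bar>Y v\<bar>)"
    unfolding decomposition using norm_triangle_ineq[of "X v *\<^sub>R u" "Y v *\<^sub>R perp u"]
    by (simp add: norm_eq_sqrt_inner[of "perp u"] flip: norm_eq_sqrt_inner) (simp add: algebra_simps)
  finally show ?thesis
    using u_nonzero by simp
qed

lemma endpoint_between_missing_lines:
  assumes "misses B h \<beta>1" "misses B (- h) \<beta>2" "closed_segment x y \<in> B"
    and "offset 0 ((\<beta>1 + \<beta>2) / 2) x * offset 0 ((\<beta>1 + \<beta>2) / 2) y \<le> 0"
  shows "offset h \<beta>1 x * offset (- h) \<beta>2 x < 0"
proof -
  have "offset h \<beta>1 x * offset h \<beta>1 y > 0" "offset (- h) \<beta>2 x * offset (- h) \<beta>2 y > 0"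
    using assms(1-3) offset_nonzero_on_segment_iff[of x y] unfolding misses_def by blast+
  moreover have mid: "offset h \<beta>1 v + offset (- h) \<beta>2 v = 2 * offset 0 ((\<beta>1 + \<beta>2) / 2) v" for v
    by (simp add: offset_def algebra_simps)
  then have "(offset h \<beta>1 x + offset (- h) \<beta>2 x) * (offset h \<beta>1 y + offset (- h) \<beta>2 y)
      = 4 * (offset 0 ((\<beta>1 + \<beta>2) / 2) x * offset 0 ((\<beta>1 + \<beta>2) / 2) y)"
    unfolding mid by simp
  then have "(offset h \<beta>1 x + offset (- h) \<beta>2 x) * (offset h \<beta>1 y + offset (- h) \<beta>2 y) \<le> 0"
    using assms(4) by linarith
  ultimately show ?thesis
    by (rule sign_change_of_sum)
qed

lemma axis_segment_meets_line_at_origin: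
  assumes "Y x = 0" "Y y = 0" "w \<in> closed_segment x y" "offset 0 \<beta> w = 0" "\<beta> \<noteq> 0"
  shows "w = p"
proof -
  obtain t where w: "w = (1 - t) *\<^sub>R x + t *\<^sub>R y"
    using assms(3) by (auto simp: in_segment)
  have "Y w = 0"
    unfolding w Y_affine assms(1,2) by simp
  moreover have "X w = 0"
    using assms(4,5) \<open>Y w = 0\<close> by (simp add: offset_def)
  ultimately show ?thesis
    using frame_eq_iff[of w p] by simp
qed

context
  fixes B :: "(real^2) set set" and \<tau> :: real
  assumes RB_near_iff: "\<And>v. \<bar>X v\<bar> + \<bar>Y v\<bar> < \<tau> \<Longrightarrow> v \<in> RB B \<longleftrightarrow> Y v = 0"
begin

lemma misses_slope_bound:
  assumes "misses B \<alpha> \<beta>"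
  shows "\<tau> * \<bar>\<beta>\<bar> \<le> \<bar>\<alpha>\<bar>"
proof (rule ccontr)
  assume "\<not> \<tau> * \<bar>\<beta>\<bar> \<le> \<bar>\<alpha>\<bar>"
  then have "\<beta> \<noteq> 0" "\<bar>\<alpha>\<bar> < \<tau> * \<bar>\<beta>\<bar>" by auto
  define v where "v = p + (- \<alpha> / (\<beta> * (u \<bullet> u))) *\<^sub>R u"
  have "X v = - \<alpha> / \<beta>" "Y v = 0"
    using inner_self_u_pos by (simp_all add: v_def)
  moreover from this have "\<bar>X v\<bar> + \<bar>Y v\<bar> < \<tau>"
    using \<open>\<beta> \<noteq> 0\<close> \<open>\<bar>\<alpha>\<bar> < \<tau> * \<bar>\<beta>\<bar>\<close> by (simp add: abs_divide pos_divide_less_eq)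
  ultimately have "v \<in> RB B" "offset \<alpha> \<beta> v = 0"
    using RB_near_iff \<open>\<beta> \<noteq> 0\<close> by (simp_all add: offset_def)
  then show False
    using not_misses_if_RB assms by blast
qed

lemma exists_missing_line:
  assumes "h \<noteq> 0" "\<bar>h\<bar> < \<tau>"
  shows "\<exists>\<beta>. misses B h \<beta>"
proof -
  define q where "q = p + (h / (u \<bullet> u)) *\<^sub>R perp u"
  have "X q = 0" "Y q = h"
    using inner_self_u_pos by (simp_all add: q_def)
  then have "q \<notin> RB B"
    using RB_near_iff assms by simp
  moreover have "p \<in> RB B"
    using RB_near_iff assms by simp
  ultimately show ?thesis
    using misses_if_not_RB \<open>X q = 0\<close> \<open>Y q = h\<close> by blast
qed

lemma between_missing_lines_near_axis:
  assumes "misses B h \<beta>1" "misses B (- h) \<beta>2" "h > 0" "\<tau> > 0"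
    and "offset h \<beta>1 e * offset (- h) \<beta>2 e < 0"
  shows "\<tau> * \<bar>Y e\<bar> < h * (\<tau> + \<bar>X e\<bar>)"
proof (rule between_lines_bound)
  show "(Y e - (h + \<beta>1 * X e)) * (Y e - (- h + \<beta>2 * X e)) < 0"
    using assms(5) by (simp only: offset_def diff_diff_eq)
  show "\<tau> * \<bar>\<beta>1\<bar> \<le> h" "\<tau> * \<bar>\<beta>2\<bar> \<le> h"
    using misses_slope_bound[OF assms(1)] misses_slope_bound[OF assms(2)] assms(3) by simp_all
qed fact

end

lemma exists_height_below_endpoints:
  assumes "finite E" "\<tau> > 0"
  obtains h where "0 < h" "h < \<tau>" "\<And>e. e \<in> E \<Longrightarrow> Y e \<noteq> 0 \<Longrightarrow> h * (\<tau> + \<bar>X e\<bar>) < \<tau> * \<bar>Y e\<bar>"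
proof -
  have "\<forall>e\<in>E. \<forall>\<^sub>F h in at_right 0. Y e \<noteq> 0 \<longrightarrow> h * (\<tau> + \<bar>X e\<bar>) < \<tau> * \<bar>Y e\<bar>"
  proof
    fix e
    have "((\<lambda>h. h * (\<tau> + \<bar>X e\<bar>)) \<longlongrightarrow> 0) (at_right 0)"
      by (intro tendsto_mult_left_zero tendsto_ident_at)
    then show "\<forall>\<^sub>F h in at_right 0. Y e \<noteq> 0 \<longrightarrow> h * (\<tau> + \<bar>X e\<bar>) < \<tau> * \<bar>Y e\<bar>"
      using assms(2) by (cases "Y e = 0") (auto intro: order_tendstoD)
  qed
  moreover have "\<forall>\<^sub>F h in at_right 0. h < \<tau>"
    using assms(2) by (auto simp: eventually_at_right_field intro: exI[of _ \<tau>])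
  ultimately have "\<forall>\<^sub>F h in at_right 0.
      0 < h \<and> h < \<tau> \<and> (\<forall>e\<in>E. Y e \<noteq> 0 \<longrightarrow> h * (\<tau> + \<bar>X e\<bar>) < \<tau> * \<bar>Y e\<bar>)"
    by (intro eventually_conj eventually_at_right_less eventually_ball_finite[OF assms(1)])
  from eventually_happens'[OF trivial_limit_at_right_real this] show ?thesis
    using that by blast
qed

lemma RB_not_locally_axis:
  assumes B: "finite B" "\<forall>S\<in>B. is_segment S" and "p \<notin> \<Union>B" "r > 0"
    and local: "ball p r \<inter> RB B = ball p r \<inter> {v. Y v = 0}"
  shows False
proof -
  define \<tau> where "\<tau> = r * norm u"
  have "\<tau> > 0"
    using \<open>r > 0\<close> u_nonzero by (simp add: \<tau>_def)
  have near: "v \<in> RB B \<longleftrightarrow> Y v = 0" if "\<bar>X v\<bar> + \<bar>Y v\<bar> < \<tau>" for v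
  proof -
    have "norm u * dist p v < norm u * r"
      using norm_mult_dist_le[of v] that by (simp add: \<tau>_def mult.commute)
    then have "v \<in> ball p r"
      using u_nonzero by simp
    then show ?thesis
      using local by blast
  qed
  obtain E where E: "finite E" "\<forall>S\<in>B. \<exists>x\<in>E. \<exists>y\<in>E. S = closed_segment x y"
    using finite_segment_endpoints[OF B] by blast
  obtain h where h: "0 < h" "h < \<tau>"
    and small: "\<And>e. e \<in> E \<Longrightarrow> Y e \<noteq> 0 \<Longrightarrow> h * (\<tau> + \<bar>X e\<bar>) < \<tau> * \<bar>Y e\<bar>"
    using exists_height_below_endpoints[OF E(1) \<open>\<tau> > 0\<close>] by blast
  obtain \<beta>1 where \<beta>1: "misses B h \<beta>1"
    using exists_missing_line[OF near, where h = h] h by auto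
  obtain \<beta>2' where "misses B (- h) \<beta>2'"
    using exists_missing_line[OF near, where h = "- h"] h by auto
  \<comment> \<open>the missing slopes form an open set, so the averaged slope can be made nonzero\<close>
  then obtain \<beta>2 where \<beta>2: "misses B (- h) \<beta>2" "\<beta>2 \<noteq> - \<beta>1"
    using exists_other_point_of_open[OF open_misses[OF B], of \<beta>2' "- h" "- \<beta>1"] by auto
  have on_axis: "Y e = 0" if "e \<in> E" "offset h \<beta>1 e * offset (- h) \<beta>2 e < 0" for e
    using between_missing_lines_near_axis[OF near \<beta>1 \<beta>2(1) h(1) \<open>\<tau> > 0\<close> that(2)]
      small[OF that(1)] by fastforce
  define \<beta> where "\<beta> = (\<beta>1 + \<beta>2) / 2"
  have "\<beta> \<noteq> 0"
    using \<beta>2(2) by (simp add: \<beta>_def)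
  have "p \<in> RB B"
    using near[of p] \<open>\<tau> > 0\<close> by simp
  then have "\<not> misses B 0 \<beta>"
    using not_misses_if_RB[of p B 0 \<beta>] by (simp add: offset_def)
  then obtain S w where "S \<in> B" "w \<in> S" "offset 0 \<beta> w = 0"
    by (auto simp: misses_def)
  obtain x y where "x \<in> E" "y \<in> E" and S: "S = closed_segment x y"
    using E(2) \<open>S \<in> B\<close> by blast
  have mid_xy: "offset 0 ((\<beta>1 + \<beta>2) / 2) x * offset 0 ((\<beta>1 + \<beta>2) / 2) y \<le> 0"
    using offset_zero_on_segment_iff \<open>w \<in> S\<close> \<open>offset 0 \<beta> w = 0\<close> S unfolding \<beta>_def by blast
  then have mid_yx: "offset 0 ((\<beta>1 + \<beta>2) / 2) y * offset 0 ((\<beta>1 + \<beta>2) / 2) x \<le> 0"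
    by (simp add: mult.commute)
  have "Y x = 0"
    by (rule on_axis[OF \<open>x \<in> E\<close> endpoint_between_missing_lines[OF \<beta>1 \<beta>2(1) _ mid_xy]])
      (simp add: \<open>S \<in> B\<close> flip: S)
  moreover have "Y y = 0"
    by (rule on_axis[OF \<open>y \<in> E\<close> endpoint_between_missing_lines[OF \<beta>1 \<beta>2(1) _ mid_yx]])
      (simp add: \<open>S \<in> B\<close> closed_segment_commute flip: S)
  ultimately have "w = p"
    using \<open>w \<in> S\<close> \<open>offset 0 \<beta> w = 0\<close> \<open>\<beta> \<noteq> 0\<close> unfolding S
    by (rule axis_segment_meets_line_at_origin)
  then show False
    using \<open>p \<notin> \<Union>B\<close> \<open>S \<in> B\<close> \<open>w \<in> S\<close> by blast
qed

end

lemma RB_not_locally_line: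
  assumes "finite B" "\<forall>S\<in>B. is_segment S" "p \<notin> \<Union>B" "u \<noteq> 0" "r > 0"
  shows "ball p r \<inter> RB B \<noteq> ball p r \<inter> line_dir p u"
proof
  interpret plane_frame p u
    using assms(4) by unfold_locales
  have "line_dir p u = {v. Y v = 0}"
    using line_dir_eq_offset_zero[of u p] inner_self_u_pos by (simp add: offset_def)
  moreover assume "ball p r \<inter> RB B = ball p r \<inter> line_dir p u"
  ultimately show False
    using RB_not_locally_axis[OF assms(1-3,5)] by simp
qed

lemma ball_inter_eq_trans:
  assumes "ball p r1 \<inter> A = ball p r1 \<inter> A'" "ball p r2 \<inter> A' = ball p r2 \<inter> A''"
  shows "ball p (min r1 r2) \<inter> A = ball p (min r1 r2) \<inter> A''"
  using assms by (auto simp: set_eq_iff)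

lemma open_segment_locally_line:
  fixes a b p :: "real^2"
  assumes "p \<in> open_segment a b"
  obtains r where "r > 0" "ball p r \<inter> closed_segment a b = ball p r \<inter> line_dir p (b - a)"
proof -
  obtain s where s: "0 < s" "s < 1" "p = (1 - s) *\<^sub>R a + s *\<^sub>R b"
    using assms by (auto simp: in_segment)
  have "a \<noteq> b"
    using assms by auto
  define r where "r = min s (1 - s) * norm (b - a)"
  have "r > 0"
    using s \<open>a \<noteq> b\<close> by (simp add: r_def)
  have "closed_segment a b \<subseteq> line_dir p (b - a)"
  proof
    fix v assume "v \<in> closed_segment a b"
    then obtain t where v: "v = (1 - t) *\<^sub>R a + t *\<^sub>R b"
      by (auto simp: in_segment)
    have "v = p + (t - s) *\<^sub>R (b - a)"
      unfolding v s(3) by (simp add: algebra_simps)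
    then show "v \<in> line_dir p (b - a)"
      by (auto simp: line_dir_def)
  qed
  moreover have "v \<in> closed_segment a b"
    if v_ball: "v \<in> ball p r" and v_line: "v \<in> line_dir p (b - a)" for v
  proof -
    obtain c where v: "v = p + c *\<^sub>R (b - a)"
      using v_line by (auto simp: line_dir_def)
    have "\<bar>c\<bar> * norm (b - a) < min s (1 - s) * norm (b - a)"
      using v_ball by (simp add: v r_def dist_norm)
    then have "\<bar>c\<bar> < min s (1 - s)"
      using \<open>a \<noteq> b\<close> by simp
    moreover have "v = (1 - (s + c)) *\<^sub>R a + (s + c) *\<^sub>R b"
      using s(3) by (simp add: v algebra_simps)
    ultimately show ?thesis
      by (auto simp: in_segment intro!: exI[of _ "s + c"])
  qed
  ultimately have "ball p r \<inter> closed_segment a b = ball p r \<inter> line_dir p (b - a)"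
    by blast
  then show ?thesis
    using that \<open>r > 0\<close> by blast
qed

lemma open_segment_point_outside:
  fixes a b x :: "real^2"
  assumes "closed K" "a \<noteq> b" "x \<in> closed_segment a b" "x \<notin> K"
  obtains p where "p \<in> open_segment a b" "p \<notin> K"
proof -
  obtain \<epsilon> where "\<epsilon> > 0" "ball x \<epsilon> \<subseteq> - K"
    using assms(1,4) open_contains_ball[of "- K"] by auto
  moreover have "x \<in> closure (open_segment a b)"
    using assms(2,3) by simp
  then obtain p where "p \<in> open_segment a b" "dist p x < \<epsilon>"
    using \<open>\<epsilon> > 0\<close> closure_approachable by metis
  moreover from \<open>dist p x < \<epsilon>\<close> have "p \<in> ball x \<epsilon>"
    by (simp add: dist_commute)
  ultimately have "p \<notin> K"
    by blast
  then show ?thesis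
    using that \<open>p \<in> open_segment a b\<close> by blast
qed

theorem lemma1:
  fixes B :: "(real^2) set set" and R :: "(real^2) set" and a b :: "real^2"
  assumes "finite B"
    and "\<forall>S\<in>B. is_segment S"
    and "maximal_region (RB B) R"
    and "a \<noteq> b"
    and "R = closed_segment a b"
  shows "R \<subseteq> \<Union>B"
proof (rule ccontr)
  assume "\<not> R \<subseteq> \<Union>B"
  moreover have "closed (\<Union>B)"
    using assms(1,2) by (intro closed_Union) (auto simp: is_segment_def)
  ultimately obtain p where p: "p \<in> open_segment a b" "p \<notin> \<Union>B"
    using open_segment_point_outside[OF _ assms(4)] assms(5) by blast
  then have "p \<in> R"
    using assms(5) by (simp add: open_closed_segment)
  then obtain r1 where "r1 > 0" and r1: "ball p r1 \<inter> RB B = ball p r1 \<inter> R"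
    using assms(3) by (auto simp: maximal_region_def)
  obtain r2 where "r2 > 0" and r2: "ball p r2 \<inter> R = ball p r2 \<inter> line_dir p (b - a)"
    using open_segment_locally_line[OF p(1)] assms(5) by blast
  have "ball p (min r1 r2) \<inter> RB B = ball p (min r1 r2) \<inter> line_dir p (b - a)"
    by (rule ball_inter_eq_trans[OF r1 r2])
  moreover have "min r1 r2 > 0"
    using \<open>r1 > 0\<close> \<open>r2 > 0\<close> by simp
  ultimately show False
    using RB_not_locally_line[OF assms(1,2) p(2), of "b - a"] assms(4) by auto
qed

end
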